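(* Let $\Gamma$ be the integer Heisenberg group, elements written $(a,b,c)$. Let $\{q_1,q_2,\dots\}$ be an infinite set of distinct primes, and for $\ell\ge1$ put $M_\ell=q_1q_2\cdots q_\ell$ and $N_\ell=q_1^2q_2^2\cdots q_\ell^2$, and $\Gamma_\ell=\{(aM_\ell,bN_\ell,cN_\ell):a,b,c\in\mathbb{Z}\}$. Then $\Gamma_\ell$ is a descending chain of finite-index subgroups, and the associated Cantor action $(X_\infty,\Gamma,\Phi)$, where $X_\infty=\varprojlim\Gamma/\Gamma_\ell$ with $\Gamma$ acting by left translation on each coset space, is topologically free and wild, and its prime spectrum is $\{q_1,q_2,\dots\}$ (each $q_i$ with finite multiplicity).
   Context: The integer Heisenberg group consists of the matrices $\begin{pmatrix}1&a&c\\0&1&b\\0&0&1\end{pmatrix}$, $a,b,c\in\mathbb{Z}$, denoted $(a,b,c)$, with product $(a,b,c)(a',b',c')=(a+a',b+b',c+c'+ab')$. For a descending chain of finite-index subgroups $\Gamma_\ell$, $X_\infty=\varprojlim\{\Gamma/\Gamma_{\ell+1}\to\Gamma/\Gamma_\ell\}$ is a Cantor space (Tychonoff topology) on which $\Gamma$ acts minimally and equicontinuously. The Steinitz order of this action is the supernatural number $\mathrm{lcm}\{[\Gamma:\Gamma_\ell]\}=\prod_p p^{\chi(p)}$, and its prime spectrum is $\{p:\chi(p)>0\}$. Topologically free: no nontrivial $\Phi(g)$ restricts to the identity on a nonempty open set. Locally quasi-analytic: there is $\varepsilon>0$ such that for every nonempty open $U$ of diameter $<\varepsilon$, nonempty open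 $V\subset U$ and group elements $g_1,g_2$, agreement of $g_1,g_2$ on $V$ implies agreement on $U$. With $\mathfrak{G}(\Phi)$ the closure of $\Phi(\Gamma)$ in $\mathrm{Homeo}(X_\infty)$ (uniform topology), the action is wild if the action of $\mathfrak{G}(\Phi)$ on $X_\infty$ is not locally quasi-analytic. *)

theory Defs
  imports "HOL-Algebra.Coset" "HOL-Analysis.Analysis" "HOL-Computational_Algebra.Primes"
begin

type_synonym heis = "int \<times> int \<times> int"

fun hmult :: "heis \<Rightarrow> heis \<Rightarrow> heis" where
  "hmult (a, b, c) (a', b', c') = (a + a', b + b', c + c' + a * b')"

definition heisG :: "heis monoid" where
  "heisG = \<lparr>carrier = UNIV, monoid.mult = hmult, one = (0, 0, 0)\<rparr>"

section \<open>The chain of subgroups (index k corresponds to the paper's \<ell> = k + 1)\<close>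

definition Mq :: "(nat \<Rightarrow> nat) \<Rightarrow> nat \<Rightarrow> int" where
  "Mq q k = (\<Prod>i\<le>k. int (q i))"

definition Nq :: "(nat \<Rightarrow> nat) \<Rightarrow> nat \<Rightarrow> int" where
  "Nq q k = (\<Prod>i\<le>k. int (q i) ^ 2)"

definition Gam :: "(nat \<Rightarrow> nat) \<Rightarrow> nat \<Rightarrow> heis set" where
  "Gam q k = {(a * Mq q k, b * Nq q k, c * Nq q k) | a b c. True}"

definition cosets :: "(nat \<Rightarrow> nat) \<Rightarrow> nat \<Rightarrow> heis set set" where
  "cosets q k = {l_coset heisG g (Gam q k) | g. g \<in> carrier heisG}"

definition idx :: "(nat \<Rightarrow> nat) \<Rightarrow> nat \<Rightarrow> nat" where
  "idx q k = card (cosets q k)"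

text \<open>Points of the inverse limit: compatible sequences of cosets; the bonding
  map Gamma/Gamma_{k+1} -> Gamma/Gamma_k sends g Gamma_{k+1} to g Gamma_k, i.e.
  compatibility is containment.\<close>
definition Xinf :: "(nat \<Rightarrow> nat) \<Rightarrow> (nat \<Rightarrow> heis set) set" where
  "Xinf q = {x. (\<forall>k. x k \<in> cosets q k) \<and> (\<forall>k. x (Suc k) \<subseteq> x k)}"

definition Xtop :: "(nat \<Rightarrow> nat) \<Rightarrow> (nat \<Rightarrow> heis set) topology" where
  "Xtop q = subtopology (product_topology (\<lambda>k. discrete_topology (cosets q k)) UNIV) (Xinf q)"

definition xdist :: "(nat \<Rightarrow> heis set) \<Rightarrow> (nat \<Rightarrow> heis set) \<Rightarrow> real" where
  "xdist x y = (if x = y then 0 else (1/2) ^ (LEAST k. x k \<noteq> y k))"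

definition xdiam :: "(nat \<Rightarrow> heis set) set \<Rightarrow> real" where
  "xdiam U = Sup {xdist x y | x y. x \<in> U \<and> y \<in> U}"

definition Phi :: "heis \<Rightarrow> (nat \<Rightarrow> heis set) \<Rightarrow> (nat \<Rightarrow> heis set)" where
  "Phi g x = (\<lambda>k. l_coset heisG g (x k))"

definition topologically_free :: "'a topology \<Rightarrow> ('a \<Rightarrow> 'a) set \<Rightarrow> bool" where
  "topologically_free T A \<longleftrightarrow>
     (\<forall>f\<in>A. (\<exists>x\<in>topspace T. f x \<noteq> x) \<longrightarrow>
        \<not> (\<exists>U. openin T U \<and> U \<noteq> {} \<and> (\<forall>x\<in>U. f x = x)))"

definition locally_quasi_analytic ::
    "'a topology \<Rightarrow> ('a set \<Rightarrow> real) \<Rightarrow> ('a \<Rightarrow> 'a) set \<Rightarrow> bool" where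
  "locally_quasi_analytic T diam A \<longleftrightarrow>
     (\<exists>\<epsilon>>0. \<forall>U V. openin T U \<and> U \<noteq> {} \<and> diam U < \<epsilon> \<and> openin T V \<and> V \<noteq> {} \<and> V \<subseteq> U \<longrightarrow>
        (\<forall>g1\<in>A. \<forall>g2\<in>A. (\<forall>x\<in>V. g1 x = g2 x) \<longrightarrow> (\<forall>x\<in>U. g1 x = g2 x)))"

text \<open>Closure of Phi(Gamma) in Homeo(Xinf) with the uniform topology (sup metric).\<close>
definition enveloping :: "(nat \<Rightarrow> nat) \<Rightarrow> ((nat \<Rightarrow> heis set) \<Rightarrow> (nat \<Rightarrow> heis set)) set" where
  "enveloping q = {f. homeomorphic_map (Xtop q) (Xtop q) f \<and>
      (\<forall>\<epsilon>>0. \<exists>g. \<forall>x\<in>Xinf q. xdist (f x) (Phi g x) < \<epsilon>)}"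

definition wild :: "(nat \<Rightarrow> nat) \<Rightarrow> bool" where
  "wild q \<longleftrightarrow> \<not> locally_quasi_analytic (Xtop q) xdiam (enveloping q)"

definition steinitz_chi :: "(nat \<Rightarrow> nat) \<Rightarrow> nat \<Rightarrow> enat" where
  "steinitz_chi q p = (SUP k. enat (multiplicity p (idx q k)))"

definition prime_spectrum :: "(nat \<Rightarrow> nat) \<Rightarrow> nat set" where
  "prime_spectrum q = {p. prime p \<and> steinitz_chi q p > 0}"

end

theory Submission
  imports Defs "HOL-Number_Theory.Residues"
begin

(*
  Gamma_l is the lattice {(a,b,c). M_l dvd a, N_l dvd b, N_l dvd c}. Its left cosets are
  parametrised by the box [0,M_l) x [0,N_l) x [0,N_l), so [Gamma : Gamma_l] = M_l N_l^2 =
  (q_1 ... q_l)^5 and every q_i occurs in the Steinitz order with exponent exactly 5.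

  Orbit points (h Gamma_l)_l are dense in X_infinity. If Phi(g) fixes one of them, then
  h^-1 g h lies in every Gamma_l, whose intersection is trivial; so only the identity fixes
  a nonempty open set.

  For an integer sequence A with N_j dvd A_(j+1) - A_j, translating level j by (A_j,0,0) is
  the uniform limit of the translations Phi(A_n,0,0), hence lies in the closure of Phi(Gamma).
  With A_j = M_m P_j^phi(N_m), P_j the product of q_i^2 over m < i <= j, Euler's theorem makes
  A convergent, and the resulting homeomorphism is the identity on the cylinder of Gamma_m
  but moves the point (0, N_(m-1), 0) of the cylinder of Gamma_(m-1), since N_m does not divide
  M_m N_(m-1). These cylinders have diameter tending to 0, so the action is wild.
*)

section \<open>The Heisenberg group and its congruence lattices\<close>

lemma (in group) l_coset_eq_iff:
  assumes "subgroup H G" "x \<in> carrier G" "y \<in> carrier G"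
  shows "x <# H = y <# H \<longleftrightarrow> inv x \<otimes> y \<in> H"
  using assms subgroup.l_coset_eq_rcong[OF assms(1) is_group]
    eq_equiv_class_iff[OF subgroup.equiv_rcong[OF assms(1) is_group]]
  by (simp add: r_congruent_def)

lemma (in group) l_coset_self:
  assumes "subgroup H G" "x \<in> carrier G"
  shows "x \<in> x <# H"
  unfolding l_coset_def using assms by (auto intro!: bexI[of _ \<one>] subgroup.one_closed)

lemma hmult_assoc: "hmult (hmult x y) z = hmult x (hmult y z)"
  by (cases x; cases y; cases z) (simp add: algebra_simps)

lemma hmult_zero_left [simp]: "hmult (0, 0, 0) g = g"
  and hmult_zero_right [simp]: "hmult g (0, 0, 0) = g"
  by (cases g; simp)+

fun hinv :: "heis \<Rightarrow> heis" where
  "hinv (a, b, c) = (- a, - b, a * b - c)"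

lemma carrier_heisG [simp]: "carrier heisG = UNIV"
  and mult_heisG [simp]: "x \<otimes>\<^bsub>heisG\<^esub> y = hmult x y"
  and one_heisG [simp]: "\<one>\<^bsub>heisG\<^esub> = (0, 0, 0)"
  by (simp_all add: heisG_def)

lemma group_heisG: "group heisG"
proof (rule groupI)
  have "hmult (hinv x) x = (0, 0, 0)" for x
    by (cases x) simp
  then show "\<exists>y\<in>carrier heisG. y \<otimes>\<^bsub>heisG\<^esub> x = \<one>\<^bsub>heisG\<^esub>" for x
    by (metis UNIV_I carrier_heisG mult_heisG one_heisG)
qed (auto simp: hmult_assoc)

interpretation heis: group heisG
  by (rule group_heisG)

lemma inv_heisG [simp]: "inv\<^bsub>heisG\<^esub> g = hinv g"
proof (rule heis.inv_equality)
  show "hinv g \<otimes>\<^bsub>heisG\<^esub> g = \<one>\<^bsub>heisG\<^esub>"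
    by (cases g) simp
qed simp_all

lemma hinv_hmult:
  "hmult (hinv (x, y, z)) (x', y', z') = (x' - x, y' - y, z' - z - x * (y' - y))"
  by (simp add: algebra_simps)

lemma l_coset_heisG: "h <#\<^bsub>heisG\<^esub> S = hmult h ` S"
  by (auto simp: l_coset_def)

lemma l_coset_heisG_zero [simp]: "(0, 0, 0) <#\<^bsub>heisG\<^esub> S = S"
  by (simp add: l_coset_heisG)

definition heis_lattice :: "int \<Rightarrow> int \<Rightarrow> heis set" where
  "heis_lattice m n = {(x, y, z). m dvd x \<and> n dvd y \<and> n dvd z}"

lemma mem_heis_lattice [simp]: "(x, y, z) \<in> heis_lattice m n \<longleftrightarrow> m dvd x \<and> n dvd y \<and> n dvd z"
  by (simp add: heis_lattice_def)

lemma subgroup_heis_lattice: "subgroup (heis_lattice m n) heisG"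
proof (rule heis.subgroupI)
  show "heis_lattice m n \<noteq> {}"
    using mem_heis_lattice[of 0 0 0] by blast
  show "inv\<^bsub>heisG\<^esub> g \<in> heis_lattice m n" if "g \<in> heis_lattice m n" for g
    using that by (cases g) auto
  show "g \<otimes>\<^bsub>heisG\<^esub> h \<in> heis_lattice m n" if "g \<in> heis_lattice m n" "h \<in> heis_lattice m n" for g h
    using that by (cases g; cases h) auto
qed auto

lemma heis_lattice_antimono: "m' dvd m \<Longrightarrow> n' dvd n \<Longrightarrow> heis_lattice m n \<subseteq> heis_lattice m' n'"
  by (auto simp: heis_lattice_def intro: dvd_trans)

lemma l_coset_heis_lattice_eq_iff:
  "(x, y, z) <#\<^bsub>heisG\<^esub> heis_lattice m n = (x', y', z') <#\<^bsub>heisG\<^esub> heis_lattice m n \<longleftrightarrow>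
     m dvd x' - x \<and> n dvd y' - y \<and> n dvd z' - z - x * (y' - y)"
  by (simp add: heis.l_coset_eq_iff[OF subgroup_heis_lattice] hinv_hmult del: hinv.simps)

lemma bij_betw_heis_lattice_cosets:
  assumes "0 < m" "0 < n"
  shows "bij_betw (\<lambda>h. h <#\<^bsub>heisG\<^esub> heis_lattice m n) ({0..<m} \<times> {0..<n} \<times> {0..<n})
           (range (\<lambda>h. h <#\<^bsub>heisG\<^esub> heis_lattice m n))"
proof -
  let ?box = "{0..<m} \<times> {0..<n} \<times> {0..<n}" and ?cos = "\<lambda>h. h <#\<^bsub>heisG\<^esub> heis_lattice m n"
  have eq_if_dvd: "a = b" if "0 \<le> a" "a < k" "0 \<le> b" "b < k" "k dvd b - a" for a b k :: int
    using that by (metis mod_eq_dvd_iff mod_pos_pos_trivial)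
  have "inj_on ?cos ?box"
  proof (rule inj_onI)
    fix h w
    assume box: "h \<in> ?box" "w \<in> ?box" and cos: "?cos h = ?cos w"
    obtain x y z x' y' z' where hw: "h = (x, y, z)" "w = (x', y', z')"
      by (metis prod_cases3)
    have dvd: "m dvd x' - x" "n dvd y' - y" "n dvd z' - z - x * (y' - y)"
      using cos by (simp_all add: hw l_coset_heis_lattice_eq_iff)
    have "x = x'" "y = y'"
      using box dvd(1,2) by (auto simp: hw intro: eq_if_dvd)
    moreover have "z = z'"
      using box dvd(3) \<open>y = y'\<close> by (auto simp: hw intro: eq_if_dvd)
    ultimately show "h = w"
      by (simp add: hw)
  qed
  moreover have "?cos h \<in> ?cos ` ?box" for h
  proof (cases h)
    case (fields x y z)
    \<comment> \<open>reduce each coordinate, the third one after correcting for the shear term\<close>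
    define w where "w = (x mod m, y mod n, (z + x * (y mod n - y)) mod n)"
    have "?cos h = ?cos w"
      unfolding fields w_def l_coset_heis_lattice_eq_iff
      by (metis mod_eq_dvd_iff mod_mod_trivial diff_diff_eq)
    moreover have "w \<in> ?box"
      using assms by (simp add: w_def)
    ultimately show ?thesis by blast
  qed
  ultimately show ?thesis
    by (auto simp: bij_betw_def)
qed

section \<open>The chain of subgroups and its Steinitz order\<close>

lemma Mq_Suc: "Mq q (Suc k) = Mq q k * int (q (Suc k))"
  by (simp add: Mq_def)

lemma Nq_eq_Mq_square: "Nq q k = Mq q k ^ 2"
  by (simp add: Nq_def Mq_def prod_power_distrib)

lemma Mq_dvd_Mq: "j \<le> k \<Longrightarrow> Mq q j dvd Mq q k"
  unfolding Mq_def by (rule prod_dvd_prod_subset) auto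

lemma Nq_dvd_Nq: "j \<le> k \<Longrightarrow> Nq q j dvd Nq q k"
  by (simp add: Nq_eq_Mq_square Mq_dvd_Mq)

lemma Mq_dvd_Nq: "Mq q k dvd Nq q k"
  by (simp add: Nq_eq_Mq_square)

lemma Gam_eq_heis_lattice: "Gam q k = heis_lattice (Mq q k) (Nq q k)"
  by (force simp: Gam_def heis_lattice_def dvd_def mult.commute)

lemma subgroup_Gam: "subgroup (Gam q k) heisG"
  by (simp add: Gam_eq_heis_lattice subgroup_heis_lattice)

lemma Gam_antimono: "j \<le> k \<Longrightarrow> Gam q k \<subseteq> Gam q j"
  by (simp add: Gam_eq_heis_lattice heis_lattice_antimono Mq_dvd_Mq Nq_dvd_Nq)

lemma cosets_eq_range: "cosets q k = range (\<lambda>h. h <#\<^bsub>heisG\<^esub> Gam q k)"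
  by (auto simp: cosets_def)

lemma prod_atMost_split:
  fixes m j :: nat
  assumes "m \<le> j"
  shows "(\<Prod>i\<le>j. f i) = (\<Prod>i\<le>m. f i) * (\<Prod>i\<in>{m<..j}. f i)"
proof -
  have "{..j} = {..m} \<union> {m<..j}"
    using assms by auto
  then show ?thesis
    by (simp, subst prod.union_disjoint) auto
qed

lemma Mq_split: "m \<le> j \<Longrightarrow> Mq q j = Mq q m * (\<Prod>i\<in>{m<..j}. int (q i))"
  unfolding Mq_def by (rule prod_atMost_split)

lemma Nq_split: "m \<le> j \<Longrightarrow> Nq q j = Nq q m * (\<Prod>i\<in>{m<..j}. int (q i) ^ 2)"
  unfolding Nq_def by (rule prod_atMost_split)

lemma multiplicity_prod_primes:
  fixes q :: "'a \<Rightarrow> nat"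
  assumes "finite I" "\<And>i. i \<in> I \<Longrightarrow> prime (q i)" "prime p"
  shows "multiplicity p (\<Prod>i\<in>I. q i) = card {i \<in> I. q i = p}"
proof -
  have "multiplicity p (\<Prod>i\<in>I. q i) = (\<Sum>i\<in>I. multiplicity p (q i))"
    using assms by (intro prime_elem_multiplicity_prod_distrib) (auto, metis not_prime_0)
  also have "\<dots> = (\<Sum>i\<in>I. if q i = p then 1 else 0)"
    using assms by (intro sum.cong) (auto simp: prime_multiplicity_other)
  also have "\<dots> = card {i \<in> I. q i = p}"
    using assms(1) by (simp add: sum.inter_filter[symmetric])
  finally show ?thesis .
qed

lemma dvd_prod_inj_primes_iff:
  assumes "inj q" "\<And>i. prime (q i)" "finite I"
  shows "q s dvd (\<Prod>i\<in>I. q i) \<longleftrightarrow> s \<in> I"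
proof
  assume "q s dvd (\<Prod>i\<in>I. q i)"
  then obtain i where "i \<in> I" "q s dvd q i"
    using prime_dvd_prod_iff[OF assms(3) assms(2)] by blast
  then show "s \<in> I"
    using primes_dvd_imp_eq[OF assms(2) assms(2)] injD[OF assms(1)] by metis
qed (rule dvd_prodI[OF assms(3)])

context
  fixes q :: "nat \<Rightarrow> nat"
  assumes prime_q: "\<And>i. prime (q i)"
begin

lemma Mq_gt: "int k < Mq q k"
proof (induction k)
  case 0
  show ?case
    using prime_gt_0_nat[OF prime_q] by (simp add: Mq_def)
next
  case (Suc k)
  have "2 \<le> q (Suc k)"
    using prime_ge_2_nat[OF prime_q] .
  then have "Mq q k * 2 \<le> Mq q (Suc k)"
    using Suc by (simp add: Mq_Suc)
  then show ?case
    using Suc by linarith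
qed

lemma Mq_pos: "0 < Mq q k"
  using Mq_gt[of k] by simp

lemma Nq_pos: "0 < Nq q k"
  using Mq_pos[of k] by (simp add: Nq_eq_Mq_square)

lemma Inter_Gam: "(\<Inter>k. Gam q k) = {(0, 0, 0)}"
proof -
  have M: "a = 0" if "\<And>k. Mq q k dvd a" for a
  proof (rule ccontr)
    assume "a \<noteq> 0"
    then have "Mq q (nat \<bar>a\<bar>) \<le> \<bar>a\<bar>"
      using that dvd_imp_le_int by (metis abs_of_pos Mq_pos)
    then show False
      using Mq_gt[of "nat \<bar>a\<bar>"] by simp
  qed
  have N: "a = 0" if "\<And>k. Nq q k dvd a" for a
    using M[of a] that dvd_trans[OF Mq_dvd_Nq] by blast
  show ?thesis
    by (auto simp: Gam_eq_heis_lattice intro: M N)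
qed

lemma idx_eq: "idx q k = (\<Prod>i\<le>k. q i) ^ 5"
proof -
  define P where "P = (\<Prod>i\<le>k. q i)"
  have M: "Mq q k = int P" and N: "Nq q k = int (P ^ 2)"
    by (simp_all add: P_def Mq_def Nq_eq_Mq_square)
  have "idx q k = card ({0..<Mq q k} \<times> {0..<Nq q k} \<times> {0..<Nq q k})"
    unfolding idx_def cosets_eq_range Gam_eq_heis_lattice
    using bij_betw_same_card[OF bij_betw_heis_lattice_cosets[OF Mq_pos Nq_pos]] by simp
  also have "\<dots> = P * P ^ 2 * P ^ 2"
    by (simp add: M N card_cartesian_product del: of_nat_power)
  also have "\<dots> = P ^ 5"
    by (simp add: numeral_eq_Suc mult_ac)
  finally show ?thesis
    by (simp add: P_def)
qed

lemma finite_cosets: "finite (cosets q k)"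
  unfolding cosets_eq_range Gam_eq_heis_lattice
  using bij_betw_finite[OF bij_betw_heis_lattice_cosets[OF Mq_pos Nq_pos]] by simp

lemma multiplicity_idx:
  assumes "prime p"
  shows "multiplicity p (idx q k) = 5 * card {i \<in> {..k}. q i = p}"
proof -
  have "(\<Prod>i\<le>k. q i) \<noteq> 0"
    using prime_q not_prime_0 by (metis finite_atMost prod_zero_iff)
  then have "multiplicity p (idx q k) = 5 * multiplicity p (\<Prod>i\<le>k. q i)"
    using assms by (simp add: idx_eq prime_elem_multiplicity_power_distrib)
  then show ?thesis
    using assms by (simp add: multiplicity_prod_primes prime_q)
qed

lemma steinitz_chi_eq_5:
  assumes "inj q"
  shows "steinitz_chi q (q j) = 5"
proof -
  have "{i \<in> {..k}. q i = q j} = (if j \<le> k then {j} else {})" for k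
    using assms by (auto dest: injD)
  then have "multiplicity (q j) (idx q k) = (if j \<le> k then 5 else 0)" for k
    by (simp add: multiplicity_idx prime_q)
  then have chi: "steinitz_chi q (q j) = (SUP k. enat (if j \<le> k then 5 else 0))"
    by (simp add: steinitz_chi_def)
  show ?thesis
    unfolding chi
  proof (rule antisym)
    show "(SUP k. enat (if j \<le> k then 5 else 0)) \<le> 5"
      by (rule SUP_least) (simp add: numeral_eq_enat)
    show "5 \<le> (SUP k. enat (if j \<le> k then 5 else 0))"
      by (rule SUP_upper2[of j]) (simp_all add: numeral_eq_enat)
  qed
qed

lemma steinitz_chi_eq_0:
  assumes "prime p" "p \<notin> range q"
  shows "steinitz_chi q p = 0"
proof -
  have "{i \<in> {..k}. q i = p} = {}" for k
    using assms(2) by auto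
  then have "multiplicity p (idx q k) = 0" for k
    using multiplicity_idx[OF assms(1), of k] by simp
  then show ?thesis
    by (simp add: steinitz_chi_def zero_enat_def)
qed

lemma prime_spectrum_eq:
  assumes "inj q"
  shows "prime_spectrum q = range q"
proof (intro equalityI subsetI)
  show "p \<in> range q" if "p \<in> prime_spectrum q" for p
  proof (rule ccontr)
    assume "p \<notin> range q"
    with that show False
      using steinitz_chi_eq_0[of p] by (simp add: prime_spectrum_def)
  qed
  show "p \<in> prime_spectrum q" if "p \<in> range q" for p
    using that steinitz_chi_eq_5[OF assms] prime_q by (auto simp: prime_spectrum_def)
qed

end

section \<open>The inverse limit and topological freeness\<close>

definition orbit_point :: "(nat \<Rightarrow> nat) \<Rightarrow> heis \<Rightarrow> nat \<Rightarrow> heis set" where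
  "orbit_point q h = (\<lambda>k. h <#\<^bsub>heisG\<^esub> Gam q k)"

lemma topspace_Xtop: "topspace (Xtop q) = Xinf q"
proof -
  have "Xinf q \<subseteq> (\<Pi>\<^sub>E k\<in>UNIV. cosets q k)"
    by (auto simp: Xinf_def PiE_iff)
  then show ?thesis
    unfolding Xtop_def by auto
qed

lemma orbit_point_in_Xinf: "orbit_point q h \<in> Xinf q"
proof -
  have "h <#\<^bsub>heisG\<^esub> Gam q (Suc k) \<subseteq> h <#\<^bsub>heisG\<^esub> Gam q k" for k
    using Gam_antimono[of k "Suc k" q] by (auto simp: l_coset_heisG)
  then show ?thesis
    by (auto simp: Xinf_def orbit_point_def cosets_eq_range)
qed

lemma Gam_in_cosets: "Gam q k \<in> cosets q k"
  using rangeI[of "\<lambda>h. h <#\<^bsub>heisG\<^esub> Gam q k" "(0, 0, 0)"] by (simp add: cosets_eq_range)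

lemma Gam_in_Xinf: "Gam q \<in> Xinf q"
  using orbit_point_in_Xinf[of q "(0, 0, 0)"] by (simp add: orbit_point_def)

lemma orbit_point_Nq: "orbit_point q (0, Nq q k, 0) k = Gam q k"
proof -
  have "(0, Nq q k, 0) <#\<^bsub>heisG\<^esub> Gam q k = (0, 0, 0) <#\<^bsub>heisG\<^esub> Gam q k"
    unfolding Gam_eq_heis_lattice l_coset_heis_lattice_eq_iff by simp
  then show ?thesis
    by (simp add: orbit_point_def)
qed

lemma Phi_orbit_point: "Phi g (orbit_point q h) = orbit_point q (hmult g h)"
  using heis.lcos_m_assoc[of "Gam q _" g h] by (simp add: Phi_def orbit_point_def)

lemma Phi_one: "Phi (0, 0, 0) x = x"
  by (simp add: Phi_def)

lemma Xinf_cosetE: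
  assumes "x \<in> Xinf q"
  obtains g where "x k = g <#\<^bsub>heisG\<^esub> Gam q k"
  using assms unfolding Xinf_def cosets_eq_range by blast

lemma Xinf_eq_orbit_point:
  assumes "x \<in> Xinf q" "h \<in> x n" "j \<le> n"
  shows "x j = orbit_point q h j"
proof -
  have "x n \<subseteq> x j"
    using assms(1,3) lift_Suc_antimono_le[of x j n] by (simp add: Xinf_def)
  moreover obtain g where g: "x j = g <#\<^bsub>heisG\<^esub> Gam q j"
    using Xinf_cosetE[OF assms(1)] .
  ultimately have "h \<in> g <#\<^bsub>heisG\<^esub> Gam q j"
    using assms(2) by blast
  then show ?thesis
    unfolding g orbit_point_def by (rule heis.l_repr_independence[OF _ _ subgroup_Gam]) simp
qed

lemma Xinf_memberE:
  assumes "x \<in> Xinf q"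
  obtains h where "h \<in> x n"
proof -
  obtain g where "x n = g <#\<^bsub>heisG\<^esub> Gam q n"
    using Xinf_cosetE[OF assms] .
  then have "g \<in> x n"
    using heis.l_coset_self[OF subgroup_Gam] by simp
  then show ?thesis
    by (rule that)
qed

lemma Xinf_eq_below:
  assumes "x \<in> Xinf q" "y \<in> Xinf q" "x n = y n" "j \<le> n"
  shows "x j = y j"
proof -
  obtain h where h: "h \<in> x n"
    using Xinf_memberE[OF assms(1)] .
  have "x j = orbit_point q h j"
    using Xinf_eq_orbit_point[OF assms(1) h assms(4)] .
  moreover have "y j = orbit_point q h j"
    using Xinf_eq_orbit_point[OF assms(2) _ assms(4)] h assms(3) by simp
  ultimately show ?thesis
    by simp
qed

lemma openin_Xtop_cylinder:
  assumes "C \<in> cosets q k"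
  shows "openin (Xtop q) {x \<in> Xinf q. x k = C}"
proof -
  have "continuous_map (Xtop q) (discrete_topology (cosets q k)) (\<lambda>x. x k)"
    unfolding Xtop_def
    by (rule continuous_map_from_subtopology[OF continuous_map_product_projection]) simp
  then have "openin (Xtop q) {x \<in> topspace (Xtop q). x k \<in> {C}}"
    using assms by (intro openin_continuous_map_preimage) auto
  then show ?thesis
    by (simp add: topspace_Xtop)
qed

lemma openin_Xtop_cylinderE:
  assumes "openin (Xtop q) U" "x \<in> U"
  obtains n where "{y \<in> Xinf q. y n = x n} \<subseteq> U"
proof -
  obtain V where V: "openin (product_topology (\<lambda>k. discrete_topology (cosets q k)) UNIV) V"
    and U: "U = V \<inter> Xinf q"
    using assms(1) unfolding Xtop_def openin_subtopology by blast
  obtain W where W: "finite {i. W i \<noteq> cosets q i}" "x \<in> Pi\<^sub>E UNIV W" "Pi\<^sub>E UNIV W \<subseteq> V"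
    using V assms(2) U unfolding openin_product_topology_alt by auto
  obtain n where n: "{i. W i \<noteq> cosets q i} \<subseteq> {..<n}"
    using finite_nat_bounded[OF W(1)] by blast
  have "y \<in> Pi\<^sub>E UNIV W" if "y \<in> Xinf q" "y n = x n" for y
  proof -
    have "y i \<in> W i" for i
    proof (cases "W i = cosets q i")
      case True
      then show ?thesis
        using that(1) by (simp add: Xinf_def)
    next
      case False
      then have "i < n"
        using n by auto
      moreover have "x \<in> Xinf q"
        using assms(2) U by blast
      ultimately have "y i = x i"
        using Xinf_eq_below[of y q x n i] that by simp
      then show ?thesis
        using W(2) by auto
    qed
    then show ?thesis
      by auto
  qed
  with W(3) U have "{y \<in> Xinf q. y n = x n} \<subseteq> U"
    by auto
  then show ?thesis ..
qed

lemma orbit_points_dense: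
  assumes "openin (Xtop q) U" "U \<noteq> {}"
  obtains h where "orbit_point q h \<in> U"
proof -
  obtain x where x: "x \<in> U"
    using assms(2) by blast
  then have "x \<in> Xinf q"
    using openin_subset[OF assms(1)] by (auto simp: topspace_Xtop)
  moreover obtain n where n: "{y \<in> Xinf q. y n = x n} \<subseteq> U"
    using openin_Xtop_cylinderE[OF assms(1) x] .
  ultimately obtain h where "h \<in> x n"
    using Xinf_memberE by blast
  then have "orbit_point q h n = x n"
    using Xinf_eq_orbit_point[OF \<open>x \<in> Xinf q\<close>] by simp
  then show ?thesis
    using n orbit_point_in_Xinf that by blast
qed

lemma xdist_le:
  assumes "\<And>j. j \<le> n \<Longrightarrow> x j = y j"
  shows "xdist x y \<le> (1/2) ^ Suc n"
proof (cases "x = y")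
  case False
  then obtain l where "x l \<noteq> y l"
    by (meson ext)
  then have "x (LEAST l. x l \<noteq> y l) \<noteq> y (LEAST l. x l \<noteq> y l)"
    by (rule LeastI)
  then have "Suc n \<le> (LEAST l. x l \<noteq> y l)"
    using assms not_less_eq_eq by blast
  then have "(1/2::real) ^ (LEAST l. x l \<noteq> y l) \<le> (1/2) ^ Suc n"
    by (rule power_decreasing) simp_all
  moreover have "xdist x y = (1/2) ^ (LEAST l. x l \<noteq> y l)"
    using False by (simp add: xdist_def)
  ultimately show ?thesis
    by (simp only:)
qed (simp add: xdist_def)

lemma xdiam_cylinder_le:
  assumes "C \<in> cosets q k"
  shows "xdiam {x \<in> Xinf q. x k = C} \<le> (1/2) ^ Suc k"
  unfolding xdiam_def
proof (rule cSup_least)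
  obtain h where "C = h <#\<^bsub>heisG\<^esub> Gam q k"
    using assms by (auto simp: cosets_eq_range)
  then have "orbit_point q h \<in> {x \<in> Xinf q. x k = C}"
    using orbit_point_in_Xinf[of q h] by (simp add: orbit_point_def)
  then show "{xdist x y |x y. x \<in> {x \<in> Xinf q. x k = C} \<and> y \<in> {x \<in> Xinf q. x k = C}} \<noteq> {}"
    by blast
next
  fix d
  assume "d \<in> {xdist x y |x y. x \<in> {x \<in> Xinf q. x k = C} \<and> y \<in> {x \<in> Xinf q. x k = C}}"
  then obtain x y where "d = xdist x y" "x \<in> Xinf q" "y \<in> Xinf q" "x k = y k"
    by auto
  then show "d \<le> (1/2) ^ Suc k"
    using Xinf_eq_below xdist_le by metis
qed

lemma Gam_cylinder_antimono:
  assumes "j \<le> n"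
  shows "{x \<in> Xinf q. x n = Gam q n} \<subseteq> {x \<in> Xinf q. x j = Gam q j}"
  using Xinf_eq_below[OF _ Gam_in_Xinf _ assms] by blast

lemma eq_zero_if_Phi_fixes_orbit_point:
  assumes "\<And>i. prime (q i)" "Phi g (orbit_point q h) = orbit_point q h"
  shows "g = (0, 0, 0)"
proof -
  have eq: "orbit_point q (hmult g h) = orbit_point q h"
    using assms(2) by (simp only: Phi_orbit_point)
  have "hmult (hinv h) (hmult g h) \<in> Gam q k" for k
  proof -
    have "h <#\<^bsub>heisG\<^esub> Gam q k = hmult g h <#\<^bsub>heisG\<^esub> Gam q k"
      using fun_cong[OF eq, of k] by (simp add: orbit_point_def)
    then show ?thesis
      using heis.l_coset_eq_iff[OF subgroup_Gam, of h "hmult g h"] by simp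
  qed
  then have "hmult (hinv h) (hmult g h) \<in> (\<Inter>k. Gam q k)"
    by blast
  then have "hmult (hinv h) (hmult g h) = (0, 0, 0)"
    by (simp add: Inter_Gam[OF assms(1)])
  then show ?thesis
    using heis.inv_solve_left[of "\<one>\<^bsub>heisG\<^esub>" h "hmult g h"] heis.r_cancel_one[of h g]
    by simp
qed

lemma topologically_free_Phi:
  assumes "\<And>i. prime (q i)"
  shows "topologically_free (Xtop q) (range Phi)"
  unfolding topologically_free_def
proof (intro ballI impI notI)
  fix f
  assume "f \<in> range Phi"
  then obtain g where f: "f = Phi g"
    by blast
  assume "\<exists>x\<in>topspace (Xtop q). f x \<noteq> x"
  then have "g \<noteq> (0, 0, 0)"
    using f Phi_one by auto
  assume "\<exists>U. openin (Xtop q) U \<and> U \<noteq> {} \<and> (\<forall>x\<in>U. f x = x)"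
  then obtain U where U: "openin (Xtop q) U" "U \<noteq> {}" "\<forall>x\<in>U. f x = x"
    by blast
  obtain h where "orbit_point q h \<in> U"
    using orbit_points_dense[OF U(1,2)] .
  then have "Phi g (orbit_point q h) = orbit_point q h"
    using U(3) f by blast
  with \<open>g \<noteq> (0, 0, 0)\<close> show False
    using eq_zero_if_Phi_fixes_orbit_point[of q g h, OF assms] by blast
qed

section \<open>Wildness\<close>

lemma Phi_in_Xinf:
  assumes "x \<in> Xinf q"
  shows "Phi g x \<in> Xinf q"
proof -
  have "Phi g x k \<in> cosets q k" for k
  proof -
    obtain h where "x k = h <#\<^bsub>heisG\<^esub> Gam q k"
      using Xinf_cosetE[OF assms] .
    then show ?thesis
      by (simp add: Phi_def cosets_eq_range heis.lcos_m_assoc)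
  qed
  moreover have "Phi g x (Suc k) \<subseteq> Phi g x k" for k
    using assms by (auto simp: Xinf_def Phi_def l_coset_heisG)
  ultimately show ?thesis
    by (simp add: Xinf_def)
qed

text \<open>
  Translating each level j by its own element (A j, 0, 0) is in general not induced by a group
  element, but for shift-compatible A it is a uniform limit of the translations Phi (A n, 0, 0).
\<close>
definition level_shift :: "(nat \<Rightarrow> int) \<Rightarrow> (nat \<Rightarrow> heis set) \<Rightarrow> nat \<Rightarrow> heis set" where
  "level_shift A x = (\<lambda>j. (A j, 0, 0) <#\<^bsub>heisG\<^esub> x j)"

lemma level_shift_zero [simp]: "level_shift (\<lambda>_. 0) x = x"
  by (simp add: level_shift_def)

definition shift_compatible :: "(nat \<Rightarrow> nat) \<Rightarrow> (nat \<Rightarrow> int) \<Rightarrow> bool" where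
  "shift_compatible q A \<longleftrightarrow> (\<forall>j. Nq q j dvd A (Suc j) - A j)"

text \<open>The conjugate of (d, 0, 0) by (x, y, z) is (d, 0, d * y).\<close>
lemma l_coset_shift_eq_iff:
  "hmult (a, 0, 0) (x, y, z) <#\<^bsub>heisG\<^esub> heis_lattice m n =
     hmult (a', 0, 0) (x, y, z) <#\<^bsub>heisG\<^esub> heis_lattice m n \<longleftrightarrow> m dvd a' - a \<and> n dvd (a' - a) * y"
proof -
  have "z + a' * y - (z + a * y) - (a + x) * 0 = (a' - a) * y"
    by (simp add: algebra_simps)
  then show ?thesis
    by (simp add: l_coset_heis_lattice_eq_iff)
qed

lemma shift_coset_eq:
  assumes "Nq q j dvd a' - a"
  shows "hmult (a, 0, 0) h <#\<^bsub>heisG\<^esub> Gam q j = hmult (a', 0, 0) h <#\<^bsub>heisG\<^esub> Gam q j"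
proof (cases h)
  case (fields x y z)
  show ?thesis
    unfolding fields Gam_eq_heis_lattice l_coset_shift_eq_iff
    using assms dvd_trans[OF Mq_dvd_Nq assms] by simp
qed

lemma shift_compatible_dvd:
  assumes "shift_compatible q A" "j \<le> n"
  shows "Nq q j dvd A n - A j"
  using assms(2)
proof (induction n rule: dec_induct)
  case (step n)
  have "Nq q j dvd A (Suc n) - A n"
    using assms(1) dvd_trans[OF Nq_dvd_Nq[OF step.hyps(1)]] by (auto simp: shift_compatible_def)
  then have "Nq q j dvd (A (Suc n) - A n) + (A n - A j)"
    using step.IH by (rule dvd_add)
  then show ?case
    by simp
qed simp

lemma level_shift_eq_Phi:
  assumes "shift_compatible q A" "x \<in> Xinf q" "j \<le> n"
  shows "level_shift A x j = Phi (A n, 0, 0) x j"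
proof -
  obtain h where h: "x j = h <#\<^bsub>heisG\<^esub> Gam q j"
    using Xinf_cosetE[OF assms(2)] .
  then show ?thesis
    using shift_coset_eq[OF shift_compatible_dvd[OF assms(1,3)], of h]
    by (simp add: level_shift_def Phi_def heis.lcos_m_assoc)
qed

lemma level_shift_in_Xinf:
  assumes "shift_compatible q A" "x \<in> Xinf q"
  shows "level_shift A x \<in> Xinf q"
proof -
  have "level_shift A x k \<in> cosets q k" for k
    using level_shift_eq_Phi[OF assms, of k k] Phi_in_Xinf[OF assms(2)] by (simp add: Xinf_def)
  moreover have "level_shift A x (Suc k) \<subseteq> level_shift A x k" for k
    using level_shift_eq_Phi[OF assms, of k "Suc k"] level_shift_eq_Phi[OF assms, of "Suc k" "Suc k"]
      Phi_in_Xinf[OF assms(2)] by (simp add: Xinf_def)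
  ultimately show ?thesis
    by (simp add: Xinf_def)
qed

lemma xdist_level_shift_Phi_le:
  assumes "shift_compatible q A" "x \<in> Xinf q"
  shows "xdist (level_shift A x) (Phi (A n, 0, 0) x) \<le> (1/2) ^ Suc n"
  using level_shift_eq_Phi[OF assms] by (intro xdist_le)

lemma continuous_map_level_shift:
  assumes "shift_compatible q A"
  shows "continuous_map (Xtop q) (Xtop q) (level_shift A)"
proof -
  have "continuous_map (Xtop q) (Xtop q) f \<longleftrightarrow>
      continuous_map (Xtop q) (product_topology (\<lambda>k. discrete_topology (cosets q k)) UNIV) f \<and>
      f \<in> topspace (Xtop q) \<rightarrow> Xinf q" for f
    by (subst (2) Xtop_def) (rule continuous_map_in_subtopology)
  moreover have "continuous_map (Xtop q) (product_topology (\<lambda>k. discrete_topology (cosets q k)) UNIV) (level_shift A)"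
    unfolding continuous_map_componentwise_UNIV
  proof
    fix k
    have proj: "continuous_map (Xtop q) (discrete_topology (cosets q k)) (\<lambda>x. x k)"
      unfolding Xtop_def
      by (rule continuous_map_from_subtopology[OF continuous_map_product_projection]) simp
    have "(A k, 0, 0) <#\<^bsub>heisG\<^esub> C \<in> cosets q k" if "C \<in> cosets q k" for C
      using that by (auto simp: cosets_eq_range heis.lcos_m_assoc)
    then have shift: "continuous_map (discrete_topology (cosets q k)) (discrete_topology (cosets q k))
        (\<lambda>C. (A k, 0, 0) <#\<^bsub>heisG\<^esub> C)"
      by simp
    have "(\<lambda>x. level_shift A x k) = (\<lambda>C. (A k, 0, 0) <#\<^bsub>heisG\<^esub> C) \<circ> (\<lambda>x. x k)"
      by (simp add: level_shift_def o_def)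
    then show "continuous_map (Xtop q) (discrete_topology (cosets q k)) (\<lambda>x. level_shift A x k)"
      using continuous_map_compose[OF proj shift] by simp
  qed
  moreover have "level_shift A \<in> topspace (Xtop q) \<rightarrow> Xinf q"
    using level_shift_in_Xinf[OF assms] by (simp add: topspace_Xtop)
  ultimately show ?thesis
    by blast
qed

lemma level_shift_neg_cancel: "level_shift (\<lambda>j. - A j) (level_shift A x) = x"
  by (simp add: level_shift_def heis.lcos_m_assoc)

lemma level_shift_in_enveloping:
  assumes "shift_compatible q A"
  shows "level_shift A \<in> enveloping q"
proof -
  have "shift_compatible q (\<lambda>j. - A j)"
    using assms by (simp add: shift_compatible_def dvd_diff_commute)
  then have "homeomorphic_maps (Xtop q) (Xtop q) (level_shift A) (level_shift (\<lambda>j. - A j))"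
    unfolding homeomorphic_maps_def
    using continuous_map_level_shift assms level_shift_neg_cancel[of A]
      level_shift_neg_cancel[of "\<lambda>j. - A j"]
    by simp
  moreover have "\<exists>g. \<forall>x\<in>Xinf q. xdist (level_shift A x) (Phi g x) < \<epsilon>" if eps: "\<epsilon> > 0" for \<epsilon>
  proof -
    obtain n where n: "(1/2::real) ^ n < \<epsilon>"
      using real_arch_pow_inv[OF eps, of "1/2"] by auto
    have "xdist (level_shift A x) (Phi (A n, 0, 0) x) < \<epsilon>" if "x \<in> Xinf q" for x
    proof -
      have "(1/2::real) ^ Suc n \<le> (1/2) ^ n"
        by (rule power_decreasing) simp_all
      then show ?thesis
        using xdist_level_shift_Phi_le[OF assms that, of n] n by linarith
    qed
    then show ?thesis
      by blast
  qed
  ultimately show ?thesis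
    unfolding enveloping_def using homeomorphic_maps_imp_map by blast
qed

lemma level_shift_fixes:
  assumes "x \<in> Xinf q" "x m = Gam q m" "\<And>j. Mq q j dvd A j \<and> Nq q j dvd A j * Nq q m"
  shows "level_shift A x = x"
proof
  fix j
  obtain h where h: "h \<in> x (max j m)"
    using Xinf_memberE[OF assms(1)] .
  obtain a b c where abc: "h = (a, b, c)"
    by (metis prod_cases3)
  have xj: "x j = h <#\<^bsub>heisG\<^esub> Gam q j"
    using Xinf_eq_orbit_point[OF assms(1) h] by (simp add: orbit_point_def)
  have "h <#\<^bsub>heisG\<^esub> Gam q m = Gam q m"
    using Xinf_eq_orbit_point[OF assms(1) h, of m] assms(2) by (simp add: orbit_point_def)
  then have "h \<in> Gam q m"
    using heis.l_coset_self[OF subgroup_Gam[of q m], of h] by simp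
  then have "A j * Nq q m dvd A j * b"
    by (simp add: abc Gam_eq_heis_lattice)
  then have "Nq q j dvd A j * b"
    using assms(3)[of j] by (blast intro: dvd_trans)
  then have "hmult (A j, 0, 0) h <#\<^bsub>heisG\<^esub> Gam q j = hmult (0, 0, 0) h <#\<^bsub>heisG\<^esub> Gam q j"
    using assms(3)[of j] unfolding abc Gam_eq_heis_lattice l_coset_shift_eq_iff
    by (simp add: dvd_diff_commute)
  then show "level_shift A x j = x j"
    by (simp add: level_shift_def xj heis.lcos_m_assoc)
qed

text \<open>
  By Euler's theorem each factor (q i ^ 2) ^ totient (Nq q m) with i > m is congruent to 1
  modulo Nq q m; this makes the sequence shift-compatible although it is divisible by the
  growing products of the new primes.
\<close>
definition euler_shift :: "(nat \<Rightarrow> nat) \<Rightarrow> nat \<Rightarrow> nat \<Rightarrow> int" where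
  "euler_shift q m j = Mq q m * (\<Prod>i\<in>{m<..j}. int (q i) ^ 2) ^ totient (nat (Nq q m))"

lemma euler_shift_self: "euler_shift q m m = Mq q m"
  by (simp add: euler_shift_def)

context
  fixes q :: "nat \<Rightarrow> nat"
  assumes inj_q: "inj q" and prime_q: "\<And>i. prime (q i)"
begin

lemma totient_Nq_pos: "0 < totient (nat (Nq q m))"
  using Nq_pos[of q m, OF prime_q] by simp

lemma Nq_dvd_euler_power:
  assumes "m < s"
  shows "Nq q m dvd (int (q s) ^ 2) ^ totient (nat (Nq q m)) - 1"
proof -
  define P where "P = (\<Prod>i\<le>m. q i)"
  have N: "Nq q m = int (P ^ 2)"
    by (simp add: P_def Nq_eq_Mq_square Mq_def)
  have "\<not> q s dvd P"
    using assms dvd_prod_inj_primes_iff[OF inj_q prime_q, of "{..m}" s] by (simp add: P_def)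
  then have "coprime (q s ^ 2) (P ^ 2)"
    using prime_imp_coprime[OF prime_q] by simp
  then have "[(q s ^ 2) ^ totient (P ^ 2) = 1] (mod P ^ 2)"
    by (rule euler_theorem)
  then show ?thesis
    unfolding N nat_int by (simp add: cong_iff_dvd_diff flip: cong_int_iff)
qed

lemma shift_compatible_euler_shift: "shift_compatible q (euler_shift q m)"
  unfolding shift_compatible_def
proof
  fix j
  show "Nq q j dvd euler_shift q m (Suc j) - euler_shift q m j"
  proof (cases "j < m")
    case True
    then show ?thesis
      by (simp add: euler_shift_def)
  next
    case False
    define T where "T = totient (nat (Nq q m))"
    define P where "P = (\<Prod>i\<in>{m<..j}. int (q i) ^ 2)"
    define Q where "Q = int (q (Suc j)) ^ 2"
    have "{m<..Suc j} = insert (Suc j) {m<..j}"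
      using False by auto
    then have "euler_shift q m (Suc j) - euler_shift q m j = Mq q m * ((Q ^ T - 1) * P ^ T)"
      by (simp add: euler_shift_def T_def P_def Q_def power_mult_distrib algebra_simps)
    moreover have "Nq q m * P dvd (Q ^ T - 1) * P ^ T"
      using Nq_dvd_euler_power[of m "Suc j"] False totient_Nq_pos
      by (intro mult_dvd_mono) (simp_all add: Q_def T_def)
    moreover have "Nq q j = Nq q m * P"
      using False by (simp add: Nq_split P_def)
    ultimately show ?thesis
      by (simp add: dvd_mult)
  qed
qed

lemma euler_shift_dvd: "Mq q j dvd euler_shift q m j \<and> Nq q j dvd euler_shift q m j * Nq q m"
proof (cases "j \<le> m")
  case True
  then show ?thesis
    by (simp add: euler_shift_def Mq_dvd_Mq Nq_dvd_Nq)
next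
  case False
  then have mj: "m \<le> j"
    by simp
  define P where "P = (\<Prod>i\<in>{m<..j}. int (q i) ^ 2)"
  define T where "T = totient (nat (Nq q m))"
  have PT: "P dvd P ^ T"
    using totient_Nq_pos by (simp add: T_def)
  have "(\<Prod>i\<in>{m<..j}. int (q i)) dvd P"
    unfolding P_def by (rule prod_dvd_prod) simp
  then have "Mq q m * (\<Prod>i\<in>{m<..j}. int (q i)) dvd Mq q m * P ^ T"
    using PT by (intro mult_dvd_mono) (auto intro: dvd_trans)
  moreover have "Nq q m * P dvd Mq q m * P ^ T * Nq q m"
    using PT by (simp add: mult_dvd_mono dvd_mult2 mult.commute mult.left_commute)
  ultimately show ?thesis
    using mj by (simp add: euler_shift_def Mq_split Nq_split P_def T_def)
qed

lemma not_Nq_Suc_dvd: "\<not> Nq q (Suc k) dvd Mq q (Suc k) * Nq q k"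
proof
  let ?Q = "int (q (Suc k))"
  assume "Nq q (Suc k) dvd Mq q (Suc k) * Nq q k"
  then have "(Nq q k * ?Q) * ?Q dvd (Nq q k * ?Q) * Mq q k"
    by (simp add: Nq_eq_Mq_square Mq_Suc power2_eq_square mult_ac)
  then have "?Q dvd Mq q k"
    using Nq_pos[of q k, OF prime_q] prime_gt_0_nat[OF prime_q, of "Suc k"] by simp
  then have "q (Suc k) dvd (\<Prod>i\<le>k. q i)"
    by (simp add: Mq_def flip: of_nat_prod)
  then show False
    using dvd_prod_inj_primes_iff[OF inj_q prime_q, of "{..k}"] by simp
qed

lemma level_shift_moves_orbit_point:
  "level_shift (euler_shift q (Suc k)) (orbit_point q (0, Nq q k, 0)) (Suc k) \<noteq>
     orbit_point q (0, Nq q k, 0) (Suc k)"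
proof -
  have "hmult (Mq q (Suc k), 0, 0) (0, Nq q k, 0) <#\<^bsub>heisG\<^esub> Gam q (Suc k) \<noteq>
      hmult (0, 0, 0) (0, Nq q k, 0) <#\<^bsub>heisG\<^esub> Gam q (Suc k)"
    unfolding Gam_eq_heis_lattice l_coset_shift_eq_iff
    using not_Nq_Suc_dvd[of k] by (simp add: dvd_diff_commute)
  then show ?thesis
    by (simp add: level_shift_def orbit_point_def euler_shift_self heis.lcos_m_assoc)
qed

lemma wild_Heisenberg_chain: "wild q"
  unfolding wild_def locally_quasi_analytic_def
proof
  assume "\<exists>\<epsilon>>0. \<forall>U V. openin (Xtop q) U \<and> U \<noteq> {} \<and> xdiam U < \<epsilon> \<and> openin (Xtop q) V \<and> V \<noteq> {} \<and> V \<subseteq> U \<longrightarrow>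
    (\<forall>g1\<in>enveloping q. \<forall>g2\<in>enveloping q. (\<forall>x\<in>V. g1 x = g2 x) \<longrightarrow> (\<forall>x\<in>U. g1 x = g2 x))"
  then obtain \<epsilon> where "\<epsilon> > 0" and lqa: "\<forall>U V. openin (Xtop q) U \<and> U \<noteq> {} \<and> xdiam U < \<epsilon> \<and>
      openin (Xtop q) V \<and> V \<noteq> {} \<and> V \<subseteq> U \<longrightarrow>
      (\<forall>g1\<in>enveloping q. \<forall>g2\<in>enveloping q. (\<forall>x\<in>V. g1 x = g2 x) \<longrightarrow> (\<forall>x\<in>U. g1 x = g2 x))"
    by (elim exE conjE)
  obtain k where k: "(1/2::real) ^ k < \<epsilon>"
    using real_arch_pow_inv[OF \<open>\<epsilon> > 0\<close>, of "1/2"] by auto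
  define U where "U = {x \<in> Xinf q. x k = Gam q k}"
  define V where "V = {x \<in> Xinf q. x (Suc k) = Gam q (Suc k)}"
  define A where "A = euler_shift q (Suc k)"
  have open_UV: "openin (Xtop q) U" "openin (Xtop q) V"
    unfolding U_def V_def by (simp_all add: openin_Xtop_cylinder Gam_in_cosets)
  have "Gam q \<in> V"
    by (simp add: V_def Gam_in_Xinf)
  moreover have "V \<subseteq> U"
    unfolding U_def V_def by (rule Gam_cylinder_antimono) simp
  moreover have "xdiam U < \<epsilon>"
    using xdiam_cylinder_le[OF Gam_in_cosets, of q k] k \<open>\<epsilon> > 0\<close> by (simp add: U_def)
  moreover have "level_shift (\<lambda>_. 0) \<in> enveloping q" "level_shift A \<in> enveloping q"
    using level_shift_in_enveloping shift_compatible_euler_shift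
    by (simp_all add: A_def shift_compatible_def)
  moreover have "\<forall>x\<in>V. level_shift (\<lambda>_. 0) x = level_shift A x"
    using level_shift_fixes[OF _ _ euler_shift_dvd] by (simp add: V_def A_def)
  ultimately have "\<forall>x\<in>U. level_shift (\<lambda>_. 0) x = level_shift A x"
    using lqa open_UV by blast
  moreover have "orbit_point q (0, Nq q k, 0) \<in> U"
    by (simp add: U_def orbit_point_in_Xinf orbit_point_Nq)
  ultimately show False
    using level_shift_moves_orbit_point[of k] by (simp add: A_def)
qed

end

theorem mainTheorem9:
  fixes q :: "nat \<Rightarrow> nat"
  assumes "inj q" and "\<forall>i. prime (q i)"
  shows "(\<forall>k. subgroup (Gam q k) heisG \<and> finite (cosets q k) \<and> Gam q (Suc k) \<subseteq> Gam q k)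
    \<and> topologically_free (Xtop q) (range Phi)
    \<and> wild q
    \<and> prime_spectrum q = range q
    \<and> (\<forall>i. steinitz_chi q (q i) < \<infinity>)"
proof -
  have prime_q: "\<And>i. prime (q i)"
    using assms(2) by blast
  have "Gam q (Suc k) \<subseteq> Gam q k" for k
    by (rule Gam_antimono) simp
  moreover have "steinitz_chi q (q i) < \<infinity>" for i
    using steinitz_chi_eq_5[OF prime_q assms(1)] by simp
  ultimately show ?thesis
    using subgroup_Gam finite_cosets[of q, OF prime_q] topologically_free_Phi[of q, OF prime_q]
      wild_Heisenberg_chain[OF assms(1) prime_q] prime_spectrum_eq[OF prime_q assms(1)]
    by blast
qed

end
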